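(* Let $|\cdot|:\mathbb{R}^n\to\mathbb{R}_{\ge0}$ be an orthant-monotonic norm and let $\|\cdot\|$ be the induced matrix norm. Then for every $A=(a_{ij})\in\mathbb{R}^{n\times n}$, $\|A\|\ge\max\{|a_{11}|,\dots,|a_{nn}|\}$ (absolute values of the diagonal entries).
   Context: The induced matrix norm is $\|A\|=\max_{|x|=1}|Ax|$. A norm $|\cdot|$ on $\mathbb{R}^n$ is orthant-monotonic if for all $x,y\in\mathbb{R}^n$: whenever $x_iy_i\ge 0$ and $|x_i|\le|y_i|$ for all $i$, then $|x|\le|y|$. *)

theory Defs
  imports "HOL-Analysis.Analysis"
begin

definition is_norm :: "(real^'n \<Rightarrow> real) \<Rightarrow> bool" where
  "is_norm N \<longleftrightarrow>
     (\<forall>x. 0 \<le> N x) \<and> (\<forall>x. N x = 0 \<longleftrightarrow> x = 0) \<and>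
     (\<forall>c x. N (c *\<^sub>R x) = \<bar>c\<bar> * N x) \<and>
     (\<forall>x y. N (x + y) \<le> N x + N y)"

definition orthant_monotonic :: "(real^'n \<Rightarrow> real) \<Rightarrow> bool" where
  "orthant_monotonic N \<longleftrightarrow>
     (\<forall>x y. (\<forall>i. x$i * y$i \<ge> 0 \<and> \<bar>x$i\<bar> \<le> \<bar>y$i\<bar>) \<longrightarrow> N x \<le> N y)"

definition induced_norm :: "(real^'n \<Rightarrow> real) \<Rightarrow> real^'n^'n \<Rightarrow> real" where
  "induced_norm N A = Sup {N (A *v x) | x. N x = 1}"

end

theory Submission
  imports Defs
begin

text \<open>
  Let \<open>i\<close> be an index of a diagonal entry of maximal modulus and \<open>u\<close> the unit vector on the
  \<open>i\<close>-th axis. Keeping only the \<open>i\<close>-th coordinate of \<open>A u\<close> gives \<open>a\<^sub>i\<^sub>i u\<close>, and by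
  orthant-monotonicity dropping coordinates does not increase the norm, so
  \<open>|a\<^sub>i\<^sub>i| = |a\<^sub>i\<^sub>i u| \<le> |A u| \<le> \<parallel>A\<parallel>\<close>. Orthant-monotonicity also gives
  \<open>|x\<^sub>j| |e\<^sub>j| \<le> |x|\<close>, which bounds \<open>|A x|\<close> on the unit sphere, so the supremum
  defining \<open>\<parallel>A\<parallel>\<close> is a genuine one.
\<close>

lemma is_norm_nonneg: "is_norm N \<Longrightarrow> 0 \<le> N x"
  unfolding is_norm_def by blast

lemma is_norm_eq_0_iff: "is_norm N \<Longrightarrow> N x = 0 \<longleftrightarrow> x = 0"
  unfolding is_norm_def by blast

lemma is_norm_scaleR: "is_norm N \<Longrightarrow> N (c *\<^sub>R x) = \<bar>c\<bar> * N x"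
  unfolding is_norm_def by blast

lemma is_norm_sum_le:
  assumes "is_norm N" and "finite S"
  shows "N (sum f S) \<le> (\<Sum>i\<in>S. N (f i))"
  using assms(2)
proof (induction S rule: finite_induct)
  case empty
  have "N 0 = 0" using is_norm_eq_0_iff[OF assms(1)] by blast
  then show ?case by simp
next
  case (insert a F)
  have "N (f a + sum f F) \<le> N (f a) + N (sum f F)"
    using assms(1) unfolding is_norm_def by blast
  then show ?case using insert by simp
qed

lemma is_norm_axis_pos: "is_norm N \<Longrightarrow> 0 < N (axis i 1)"
  using is_norm_nonneg is_norm_eq_0_iff by (metis axis_eq_0_iff less_eq_real_def zero_neq_one)

lemma scaleR_axis: "c *\<^sub>R axis i d = axis i (c * d :: real)"
  by (simp add: axis_def vec_eq_iff)

lemma orthant_monotonic_axis_le: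
  "orthant_monotonic N \<Longrightarrow> N (axis i (x$i)) \<le> N x"
  unfolding orthant_monotonic_def by (auto simp: axis_def)

lemma orthant_monotonic_coord_le:
  assumes "is_norm N" and "orthant_monotonic N"
  shows "\<bar>x$i\<bar> * N (axis i 1) \<le> N x"
  using orthant_monotonic_axis_le[OF assms(2), of i x] is_norm_scaleR[OF assms(1), of "x$i" "axis i 1"]
  by (simp add: scaleR_axis)

lemma matrix_vector_mult_as_sum_columns:
  "A *v x = (\<Sum>j\<in>UNIV. x$j *\<^sub>R (A *v axis j (1::real)))"
proof -
  have "A *v x = A *v (\<Sum>j\<in>UNIV. x$j *s axis j 1)" by (simp add: basis_expansion)
  then show ?thesis by (simp add: vec.sum scalar_mult_eq_scaleR matrix_vector_mult_scaleR)
qed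

lemma matrix_vector_mult_axis_nth: "(A *v axis i c) $ k = A$k$i * (c::real)"
  by (simp add: matrix_vector_mult_def axis_def if_distrib[of "\<lambda>t. A$k$_ * t"] cong: if_cong)

lemma induced_norm_bdd_above:
  assumes "is_norm N" and "orthant_monotonic N"
  shows "bdd_above {N (A *v x) | x. N x = 1}"
proof (rule bdd_aboveI)
  fix s assume "s \<in> {N (A *v x) | x. N x = 1}"
  then obtain x where x: "N x = 1" "s = N (A *v x)" by auto
  have "s = N (\<Sum>j\<in>UNIV. x$j *\<^sub>R (A *v axis j 1))"
    using x(2) matrix_vector_mult_as_sum_columns[of A x] by simp
  also have "\<dots> \<le> (\<Sum>j\<in>UNIV. N (x$j *\<^sub>R (A *v axis j 1)))"
    using is_norm_sum_le[OF assms(1) finite] .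
  also have "\<dots> \<le> (\<Sum>j\<in>UNIV. N (A *v axis j 1) / N (axis j 1))"
  proof (rule sum_mono)
    fix j
    have "\<bar>x$j\<bar> \<le> 1 / N (axis j 1)"
      using orthant_monotonic_coord_le[OF assms, of x j] x is_norm_axis_pos[OF assms(1), of j]
      by (simp add: field_simps)
    then have "\<bar>x$j\<bar> * N (A *v axis j 1) \<le> N (A *v axis j 1) / N (axis j 1)"
      using mult_right_mono[OF _ is_norm_nonneg[OF assms(1)]] by fastforce
    then show "N (x$j *\<^sub>R (A *v axis j 1)) \<le> N (A *v axis j 1) / N (axis j 1)"
      by (simp add: is_norm_scaleR[OF assms(1)])
  qed
  finally show "s \<le> (\<Sum>j\<in>UNIV. N (A *v axis j 1) / N (axis j 1))" .
qed

lemma diag_le_induced_norm: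
  assumes "is_norm N" and "orthant_monotonic N"
  shows "\<bar>A$i$i\<bar> \<le> induced_norm N A"
proof -
  define u where "u = axis i (1 / N (axis i 1))"
  have unit: "N u = 1"
    using is_norm_axis_pos[OF assms(1), of i] is_norm_scaleR[OF assms(1), of "1 / N (axis i 1)" "axis i 1"]
    by (simp add: u_def scaleR_axis)
  have "axis i ((A *v u)$i) = A$i$i *\<^sub>R u"
    by (simp add: u_def matrix_vector_mult_axis_nth scaleR_axis)
  then have "\<bar>A$i$i\<bar> \<le> N (A *v u)"
    using orthant_monotonic_axis_le[OF assms(2), of i "A *v u"]
    by (simp add: is_norm_scaleR[OF assms(1)] unit)
  also have "\<dots> \<le> induced_norm N A"
    unfolding induced_norm_def
    by (rule cSup_upper[OF _ induced_norm_bdd_above[OF assms]]) (use unit in auto)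
  finally show ?thesis .
qed

theorem lemma1:
  fixes N :: "real^'n \<Rightarrow> real" and A :: "real^'n^'n"
  assumes "is_norm N" and "orthant_monotonic N"
  shows "induced_norm N A \<ge> Max {\<bar>A$i$i\<bar> | i. True}"
proof -
  have "{\<bar>A$i$i\<bar> | i. True} = range (\<lambda>i. \<bar>A$i$i\<bar>)" by auto
  then show ?thesis using diag_le_induced_norm[OF assms] by simp
qed

end
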